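(* For all natural numbers $P, N, m \geq 1$ and every real number $x \geq 1$, one has $$\Big|\sum_{n \leq x:\, (n,P)=1} \frac{\mu(n)}{n}\Big| \leq 1, \qquad \Big|\sum_{n \mid N:\, n \leq x} \frac{\mu(n)}{n}\Big| \leq 1, \qquad \Big|\sum_{n \leq x} \frac{\mu(mn)}{n}\Big| \leq 1,$$ where $n$ ranges over natural numbers.
   Context: $\mu$ denotes the Möbius function: $\mu(n) = (-1)^k$ if $n$ is a product of $k$ distinct primes, and $\mu(n)=0$ otherwise. $(n,P)$ denotes the greatest common divisor of $n$ and $P$. *)

theory Defs
  imports Complex_Main "HOL-Computational_Algebra.Squarefree"
begin

text \<open>Moebius function: (-1)^k if n is a product of k distinct primes, 0 otherwise.
  Defined for positive n; mu 0 = 0 by convention (irrelevant: n ranges over n >= 1).\<close>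
definition moebius_mu :: "nat \<Rightarrow> int" where
  "moebius_mu n = (if n = 0 then 0 else if squarefree n then (-1) ^ card (prime_factors n) else 0)"

end

theory Submission
  imports Defs
begin

text \<open>Put \<open>M = \<lfloor>x\<rfloor>\<close>. Writing \<open>x/d = \<lfloor>M/d\<rfloor> + frac (x/d)\<close>, \<open>x\<close> times the first sum becomes
  \<open>\<Sum> \<mu>(d) \<lfloor>M/d\<rfloor>\<close> over \<open>d \<le> M\<close> coprime to \<open>P\<close>, plus an error of at most one per summand.
  Exchanging the sum with the count of multiples of \<open>d\<close>, the main term counts the \<open>k \<le> M\<close> all of
  whose prime factors divide \<open>P\<close>. These \<open>k\<close> and the \<open>n \<le> M\<close> coprime to \<open>P\<close> have only \<open>1\<close> in
  common, so main term and error together lie in \<open>[-x, x]\<close>.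
  The second sum is the first one for \<open>P\<close> the product of the primes \<open>\<le> x\<close> not dividing \<open>N\<close>:
  on squarefree \<open>n \<le> x\<close> the conditions \<open>n | N\<close> and \<open>(n,P) = 1\<close> agree.
  In the third sum only \<open>n\<close> coprime to \<open>m\<close> contribute, and for them \<open>\<mu>(mn) = \<mu>(m) \<mu>(n)\<close>.\<close>

lemma squarefree_gt_0: "squarefree (n :: nat) \<Longrightarrow> n > 0"
  by (rule ccontr) simp

lemma prod_prime_factors_squarefree:
  fixes d :: nat assumes "squarefree d"
  shows "\<Prod>(prime_factors d) = d"
proof -
  have "d \<noteq> 0" using assms by (simp add: squarefree_gt_0)
  then have "d = (\<Prod>p \<in> prime_factors d. p ^ multiplicity p d)"
    by (simp add: prod_prime_factors)
  also have "\<dots> = \<Prod>(prime_factors d)"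
    using assms \<open>d \<noteq> 0\<close> by (intro prod.cong) (auto simp: squarefree_factorial_semiring')
  finally show ?thesis by simp
qed

lemma
  fixes S :: "nat set" assumes "finite S" "\<And>p. p \<in> S \<Longrightarrow> prime p"
  shows prime_factors_prod_primes: "prime_factors (\<Prod>S) = S"
    and squarefree_prod_primes: "squarefree (\<Prod>S)"
proof -
  have "prime_factors (prod id S) = \<Union>((prime_factors \<circ> id) ` S)"
    using assms by (intro prime_factors_prod) (auto, metis not_prime_0)
  also have "\<dots> = S" using assms(2) by (auto simp: prime_prime_factors)
  finally show "prime_factors (\<Prod>S) = S" by simp
  show "squarefree (\<Prod>S)"
    using assms(2) by (intro squarefree_prod_coprime) (auto simp: primes_coprime squarefree_prime)
qed

lemma squarefree_dvdI:
  fixes d k :: nat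
  assumes "squarefree d" "k \<noteq> 0" "prime_factors d \<subseteq> prime_factors k"
  shows "d dvd k"
proof -
  have "d \<noteq> 0" using assms(1) by (simp add: squarefree_gt_0)
  show ?thesis
  proof (subst prime_multiplicity_le_imp_dvd[OF \<open>d \<noteq> 0\<close> assms(2)], intro allI impI)
    fix p :: nat assume "prime p"
    show "multiplicity p d \<le> multiplicity p k"
    proof (cases "p \<in> prime_factors d")
      case True
      then have "multiplicity p d = 1"
        using assms(1) \<open>d \<noteq> 0\<close> by (auto simp: squarefree_factorial_semiring')
      moreover have "multiplicity p k \<ge> 1"
        using True assms(3) by (auto simp: prime_factors_multiplicity)
      ultimately show ?thesis by simp
    next
      case False
      then show ?thesis
        using \<open>prime p\<close> \<open>d \<noteq> 0\<close> by (simp add: in_prime_factors_iff not_dvd_imp_multiplicity_0)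
    qed
  qed
qed

lemma coprime_iff_no_common_prime_divisor:
  fixes a b :: nat
  shows "coprime a b \<longleftrightarrow> (\<forall>p. prime p \<longrightarrow> p dvd a \<longrightarrow> \<not> p dvd b)"
proof
  assume "coprime a b"
  then show "\<forall>p. prime p \<longrightarrow> p dvd a \<longrightarrow> \<not> p dvd b"
    by (auto dest: coprime_common_divisor)
next
  assume "\<forall>p. prime p \<longrightarrow> p dvd a \<longrightarrow> \<not> p dvd b"
  then show "coprime a b"
    using prime_factor_nat[of "gcd a b"] by (auto simp: coprime_iff_gcd_eq_1)
qed

lemma abs_moebius_mu_le: "\<bar>real_of_int (moebius_mu n)\<bar> \<le> 1"
  by (simp add: moebius_mu_def power_abs)

lemma moebius_mu_prod_primes:
  fixes S :: "nat set" assumes "finite S" "\<And>p. p \<in> S \<Longrightarrow> prime p"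
  shows "moebius_mu (\<Prod>S) = (-1) ^ card S"
proof -
  have "\<Prod>S \<noteq> 0" using assms by (metis not_prime_0 prod_zero_iff)
  then show ?thesis
    using assms by (simp add: moebius_mu_def prime_factors_prod_primes squarefree_prod_primes)
qed

lemma moebius_mu_mult_coprime:
  fixes m n :: nat assumes "coprime m n"
  shows "moebius_mu (m * n) = moebius_mu m * moebius_mu n"
proof (cases "m = 0 \<or> n = 0")
  case False
  show ?thesis
  proof (cases "squarefree m \<and> squarefree n")
    case True
    have "prime_factors m \<inter> prime_factors n = {}"
      using assms by (auto simp: in_prime_factors_iff dest: coprime_common_divisor)
    moreover have "prime_factors (m * n) = prime_factors m \<union> prime_factors n"
      using False by (intro prime_factors_product) auto
    ultimately have "card (prime_factors (m * n)) = card (prime_factors m) + card (prime_factors n)"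
      by (simp add: card_Un_disjoint)
    moreover have "squarefree (m * n)" using True assms by (intro squarefree_mult_coprime) auto
    ultimately show ?thesis using True False by (simp add: moebius_mu_def power_add)
  next
    case False
    then have "\<not> squarefree (m * n)" using squarefree_multD by blast
    then show ?thesis using False by (auto simp: moebius_mu_def)
  qed
qed (auto simp: moebius_mu_def)

lemma moebius_mu_mult_not_coprime:
  fixes m n :: nat assumes "\<not> coprime m n"
  shows "moebius_mu (m * n) = 0"
proof -
  obtain p where p: "prime p" "p dvd m" "p dvd n"
    using assms by (auto simp: coprime_iff_no_common_prime_divisor)
  then have "p ^ 2 dvd m * n" by (auto simp: power2_eq_square intro: mult_dvd_mono)
  then have "\<not> squarefree (m * n)" using p by (intro not_squarefreeI) auto
  then show ?thesis by (simp add: moebius_mu_def)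
qed

lemma sum_Pow_minus_one_power:
  assumes "finite Q"
  shows "(\<Sum>S\<in>Pow Q. (-1::'a::comm_ring_1) ^ card S) = (if Q = {} then 1 else 0)"
proof -
  have "(\<Prod>x\<in>Q. (1::'a) - 1) = (\<Sum>S\<in>Pow Q. (-1) ^ card S * (\<Prod>x\<in>S. 1) * (\<Prod>x\<in>Q-S. 1))"
    by (rule prod_diff_conv_sum[OF assms])
  then show ?thesis using assms by (auto simp: power_0_left card_eq_0_iff)
qed

text \<open>Squarefree numbers supported on a finite set of primes \<open>Q\<close> are exactly the products of
  subsets of \<open>Q\<close>, so the sum below is the binomial sum \<open>(1 - 1) ^ card Q\<close>.\<close>
lemma sum_moebius_supported:
  assumes "finite Q" "\<And>p. p \<in> Q \<Longrightarrow> prime p"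
  shows "(\<Sum>d | squarefree d \<and> prime_factors d \<subseteq> Q. moebius_mu d) = (if Q = {} then 1 else 0)"
proof -
  have primes: "finite S" "\<And>p. p \<in> S \<Longrightarrow> prime p" if "S \<subseteq> Q" for S
    using that assms finite_subset by auto
  have "bij_betw Prod (Pow Q) {d. squarefree d \<and> prime_factors d \<subseteq> Q}"
  proof (rule bij_betw_byWitness[where f' = prime_factors])
    show "\<forall>S\<in>Pow Q. prime_factors (\<Prod>S) = S"
      using primes by (simp add: prime_factors_prod_primes)
    show "Prod ` Pow Q \<subseteq> {d. squarefree d \<and> prime_factors d \<subseteq> Q}"
      using primes by (auto simp: prime_factors_prod_primes squarefree_prod_primes)
  qed (auto simp: prod_prime_factors_squarefree)
  then have "(\<Sum>d | squarefree d \<and> prime_factors d \<subseteq> Q. moebius_mu d)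
      = (\<Sum>S\<in>Pow Q. moebius_mu (\<Prod>S))"
    by (rule sum.reindex_bij_betw[symmetric])
  also have "\<dots> = (\<Sum>S\<in>Pow Q. (-1) ^ card S)"
    using primes by (intro sum.cong refl moebius_mu_prod_primes) auto
  finally show ?thesis by (simp add: sum_Pow_minus_one_power[OF assms(1)])
qed

lemma sum_moebius_coprime_divisors:
  fixes k P :: nat assumes "k \<noteq> 0"
  shows "(\<Sum>d | d dvd k \<and> coprime d P. moebius_mu d) =
         (if prime_factors k \<subseteq> {p. p dvd P} then 1 else 0)"
proof -
  define Q where "Q = {p \<in> prime_factors k. \<not> p dvd P}"
  have "(\<Sum>d | d dvd k \<and> coprime d P. moebius_mu d)
      = (\<Sum>d | squarefree d \<and> prime_factors d \<subseteq> Q. moebius_mu d)"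
  proof (rule sum.mono_neutral_right)
    show "finite {d. d dvd k \<and> coprime d P}" using assms by simp
    show "{d. squarefree d \<and> prime_factors d \<subseteq> Q} \<subseteq> {d. d dvd k \<and> coprime d P}"
    proof safe
      fix d assume d: "squarefree d" "prime_factors d \<subseteq> Q"
      then have "d \<noteq> 0" by (simp add: squarefree_gt_0)
      show "d dvd k" using d assms by (intro squarefree_dvdI) (auto simp: Q_def)
      show "coprime d P"
        unfolding coprime_iff_no_common_prime_divisor
        using d \<open>d \<noteq> 0\<close> by (auto simp: Q_def in_prime_factors_iff)
    qed
    show "\<forall>d \<in> {d. d dvd k \<and> coprime d P} - {d. squarefree d \<and> prime_factors d \<subseteq> Q}.
            moebius_mu d = 0"
    proof
      fix d assume d: "d \<in> {d. d dvd k \<and> coprime d P} - {d. squarefree d \<and> prime_factors d \<subseteq> Q}"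
      have "prime_factors d \<subseteq> Q"
      proof
        fix p assume "p \<in> prime_factors d"
        moreover have "prime_factors d \<subseteq> prime_factors k" using d assms by (intro dvd_prime_factors) auto
        ultimately show "p \<in> Q"
          using d by (auto simp: Q_def coprime_iff_no_common_prime_divisor)
      qed
      then show "moebius_mu d = 0" using d by (simp add: moebius_mu_def)
    qed
  qed
  also have "\<dots> = (if Q = {} then 1 else 0)" by (rule sum_moebius_supported) (auto simp: Q_def)
  also have "Q = {} \<longleftrightarrow> prime_factors k \<subseteq> {p. p dvd P}" by (auto simp: Q_def)
  finally show ?thesis .
qed

lemma card_multiples_atLeastAtMost:
  fixes d M :: nat assumes "d \<noteq> 0"
  shows "card {k \<in> {1..M}. d dvd k} = M div d"
proof -
  have "{k \<in> {1..M}. d dvd k} = (\<lambda>j. d * j) ` {1..M div d}"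
  proof safe
    fix k assume "k \<in> {1..M}" "d dvd k"
    then obtain j where "k = d * j" "1 \<le> j" "d * j \<le> M" by (auto elim!: dvdE)
    with assms show "k \<in> (\<lambda>j. d * j) ` {1..M div d}"
      by (auto simp: less_eq_div_iff_mult_less_eq mult.commute[of d])
  next
    fix j assume "j \<in> {1..M div d}"
    with assms show "d * j \<in> {1..M}"
      by (auto simp: less_eq_div_iff_mult_less_eq mult.commute[of d])
  qed simp
  also have "card \<dots> = M div d"
    using assms by (subst card_image) (auto simp: inj_on_def)
  finally show ?thesis .
qed

definition coprime_upto :: "nat \<Rightarrow> nat \<Rightarrow> nat set" where
  "coprime_upto P M = {n \<in> {1..M}. coprime n P}"

definition supported_upto :: "nat \<Rightarrow> nat \<Rightarrow> nat set" where
  "supported_upto P M = {k \<in> {1..M}. prime_factors k \<subseteq> {p. p dvd P}}"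

lemma finite_coprime_upto [simp]: "finite (coprime_upto P M)"
  by (simp add: coprime_upto_def)

lemma card_coprime_upto_le: "card (coprime_upto P M) \<le> M"
proof -
  have "coprime_upto P M \<subseteq> {1..M}" by (auto simp: coprime_upto_def)
  from card_mono[OF _ this] show ?thesis by simp
qed

lemma sum_moebius_coprime_upto_times_div:
  "(\<Sum>d\<in>coprime_upto P M. moebius_mu d * int (M div d)) = int (card (supported_upto P M))"
proof -
  have "(\<Sum>d\<in>coprime_upto P M. moebius_mu d * int (M div d))
      = (\<Sum>d\<in>coprime_upto P M. \<Sum>k | k \<in> {1..M} \<and> d dvd k. moebius_mu d)"
  proof (intro sum.cong refl)
    fix d assume "d \<in> coprime_upto P M"
    then have "d \<noteq> 0" by (simp add: coprime_upto_def)
    then show "moebius_mu d * int (M div d) = (\<Sum>k | k \<in> {1..M} \<and> d dvd k. moebius_mu d)"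
      using card_multiples_atLeastAtMost[of d M] by simp
  qed
  also have "\<dots> = (\<Sum>k\<in>{1..M}. \<Sum>d | d \<in> coprime_upto P M \<and> d dvd k. moebius_mu d)"
    by (rule sum.swap_restrict) simp_all
  also have "\<dots> = (\<Sum>k\<in>{1..M}. if k \<in> supported_upto P M then 1 else 0)"
  proof (intro sum.cong refl)
    fix k assume k: "k \<in> {1..M}"
    then have "{d. d \<in> coprime_upto P M \<and> d dvd k} = {d. d dvd k \<and> coprime d P}"
      by (auto simp: coprime_upto_def dest: dvd_imp_le intro: dvd_pos_nat)
    with k show "(\<Sum>d | d \<in> coprime_upto P M \<and> d dvd k. moebius_mu d)
        = (if k \<in> supported_upto P M then 1 else 0)"
      by (simp add: sum_moebius_coprime_divisors supported_upto_def)
  qed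
  also have "\<dots> = int (card (supported_upto P M))"
  proof -
    have "supported_upto P M \<subseteq> {1..M}" by (auto simp: supported_upto_def)
    then show ?thesis by (simp add: sum.If_cases Int_absorb1 Int_absorb2)
  qed
  finally show ?thesis .
qed

lemma card_supported_upto_add_card_coprime_upto:
  "card (supported_upto P M) + card (coprime_upto P M) \<le> M + 1"
proof -
  let ?A = "supported_upto P M" and ?C = "coprime_upto P M"
  have "?A \<inter> ?C \<subseteq> {1}"
  proof
    fix k assume k: "k \<in> ?A \<inter> ?C"
    show "k \<in> {1}"
    proof (rule ccontr)
      assume "k \<notin> {1}"
      then obtain p where "prime p" "p dvd k" using prime_factor_nat by auto
      moreover have "k \<noteq> 0" using k by (simp add: coprime_upto_def)
      ultimately show False
        using k by (auto simp: supported_upto_def coprime_upto_def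
                          coprime_iff_no_common_prime_divisor in_prime_factors_iff)
    qed
  qed
  then have "card (?A \<inter> ?C) \<le> card {1::nat}" by (intro card_mono) auto
  moreover have "card (?A \<union> ?C) \<le> card {1..M}"
    by (intro card_mono) (auto simp: supported_upto_def coprime_upto_def)
  moreover have "card ?A + card ?C = card (?A \<union> ?C) + card (?A \<inter> ?C)"
    by (rule card_Un_Int) (simp_all add: supported_upto_def)
  ultimately show ?thesis by simp
qed

lemma of_nat_le_iff_le_nat_floor:
  fixes x :: real assumes "0 \<le> x"
  shows "real n \<le> x \<longleftrightarrow> n \<le> nat \<lfloor>x\<rfloor>"
  using assms by (simp add: le_nat_iff le_floor_iff)

lemma finite_of_nat_le: "finite {n. real n \<le> (x :: real)}"
  by (rule finite_subset[of _ "{..nat \<lfloor>x\<rfloor>}"]) (auto intro: le_nat_floor)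

lemma frac_divide_nat_floor:
  fixes x :: real assumes "0 \<le> x"
  shows "x / real d = real (nat \<lfloor>x\<rfloor> div d) + frac (x / real d)"
proof -
  have "\<lfloor>x / real_of_int (int d)\<rfloor> = \<lfloor>x\<rfloor> div int d" by (rule floor_divide_real_eq_div) simp
  also have "\<dots> = int (nat \<lfloor>x\<rfloor> div d)" using assms by (simp add: zdiv_int)
  finally show ?thesis by (simp add: frac_def)
qed

lemma x_times_sum_moebius_coprime_upto:
  fixes x :: real assumes "0 \<le> x"
  defines "M \<equiv> nat \<lfloor>x\<rfloor>"
  shows "x * (\<Sum>d\<in>coprime_upto P M. moebius_mu d / real d)
       = card (supported_upto P M) + (\<Sum>d\<in>coprime_upto P M. moebius_mu d * frac (x / d))"
proof -
  have "x * (\<Sum>d\<in>coprime_upto P M. moebius_mu d / real d)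
      = (\<Sum>d\<in>coprime_upto P M. moebius_mu d * real (M div d) + moebius_mu d * frac (x / d))"
    unfolding sum_distrib_left
  proof (intro sum.cong refl)
    fix d
    have "x * (moebius_mu d / real d) = moebius_mu d * (x / real d)" by simp
    also have "x / real d = real (M div d) + frac (x / real d)"
      unfolding M_def by (rule frac_divide_nat_floor[OF assms(1)])
    finally show "x * (moebius_mu d / real d)
        = moebius_mu d * real (M div d) + moebius_mu d * frac (x / d)"
      by (simp add: distrib_left)
  qed
  moreover have "real_of_int (\<Sum>d\<in>coprime_upto P M. moebius_mu d * int (M div d))
      = card (supported_upto P M)"
    by (simp only: sum_moebius_coprime_upto_times_div of_int_of_nat_eq)
  ultimately show ?thesis by (simp add: sum.distrib)
qed

lemma abs_sum_moebius_coprime_le_1: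
  fixes P :: nat and x :: real assumes "x \<ge> 1"
  shows "\<bar>\<Sum>n\<in>{n. 1 \<le> n \<and> real n \<le> x \<and> coprime n P}. moebius_mu n / real n\<bar> \<le> 1"
proof -
  define M where "M = nat \<lfloor>x\<rfloor>"
  define C where "C = coprime_upto P M"
  define S where "S = (\<Sum>n\<in>C. moebius_mu n / real n)"
  define R where "R = (\<Sum>d\<in>C - {1}. moebius_mu d * frac (x / d))"
  have "real M \<le> x" using assms of_nat_le_iff_le_nat_floor[of x M] by (simp add: M_def)
  have "1 \<in> C"
    using assms of_nat_le_iff_le_nat_floor[of x 1] by (simp add: C_def coprime_upto_def M_def)
  have "(\<Sum>d\<in>C. moebius_mu d * frac (x / d)) = frac x + R"
    unfolding R_def by (subst sum.remove[OF _ \<open>1 \<in> C\<close>]) (simp_all add: C_def moebius_mu_def)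
  then have xS: "x * S = card (supported_upto P M) + (x - M + R)"
    using x_times_sum_moebius_coprime_upto[of x P] assms by (simp add: S_def C_def M_def frac_def)
  have "\<bar>R\<bar> \<le> (\<Sum>d\<in>C - {1}. 1)"
    unfolding R_def using abs_moebius_mu_le less_imp_le[OF frac_lt_1]
    by (intro order.trans[OF sum_abs] sum_mono) (auto simp: abs_mult intro!: mult_le_one)
  also have "\<dots> = real (card C) - 1"
  proof -
    have "card C > 0" using \<open>1 \<in> C\<close> by (auto simp: C_def card_gt_0_iff)
    then show ?thesis using \<open>1 \<in> C\<close> by (simp add: C_def of_nat_diff Suc_le_eq)
  qed
  finally have "\<bar>R\<bar> \<le> real (card C) - 1" .
  moreover have "real (card (supported_upto P M)) + card C \<le> M + 1" "real (card C) \<le> M"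
    using card_supported_upto_add_card_coprime_upto[of P M] card_coprime_upto_le[of P M]
    unfolding C_def by linarith+
  ultimately have "- x \<le> x * S" "x * S \<le> x" using xS \<open>real M \<le> x\<close> unfolding abs_le_iff by linarith+
  then have "x * \<bar>S\<bar> \<le> x * 1" by (cases "S \<ge> 0") simp_all
  then have "\<bar>S\<bar> \<le> 1" using assms by simp
  moreover have "{n. 1 \<le> n \<and> real n \<le> x \<and> coprime n P} = C"
    using assms by (auto simp: C_def M_def coprime_upto_def of_nat_le_iff_le_nat_floor)
  ultimately show ?thesis by (simp add: S_def)
qed

lemma abs_sum_moebius_mult_le_1:
  fixes m :: nat and x :: real assumes "x \<ge> 1"
  shows "\<bar>\<Sum>n\<in>{n. 1 \<le> n \<and> real n \<le> x}. moebius_mu (m * n) / real n\<bar> \<le> 1"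
proof -
  let ?B = "{n. 1 \<le> n \<and> real n \<le> x}" and ?C = "{n. 1 \<le> n \<and> real n \<le> x \<and> coprime n m}"
  have "finite ?B" using finite_of_nat_le[of x] by (rule finite_subset[rotated]) auto
  then have "(\<Sum>n\<in>?B. moebius_mu (m * n) / real n) = (\<Sum>n\<in>?C. moebius_mu (m * n) / real n)"
    by (intro sum.mono_neutral_right) (auto simp: moebius_mu_mult_not_coprime coprime_commute)
  also have "\<dots> = moebius_mu m * (\<Sum>n\<in>?C. moebius_mu n / real n)"
    unfolding sum_distrib_left
    by (intro sum.cong refl) (simp add: moebius_mu_mult_coprime coprime_commute)
  finally show ?thesis
    using abs_moebius_mu_le[of m] abs_sum_moebius_coprime_le_1[OF assms, of m]
    by (simp add: abs_mult mult_le_one)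
qed

lemma squarefree_dvd_iff_coprime_prod_primes:
  fixes n N M :: nat assumes "squarefree n" "n \<le> M"
  shows "n dvd N \<longleftrightarrow> coprime n (\<Prod>{p. prime p \<and> p \<le> M \<and> \<not> p dvd N})"
proof -
  let ?Q = "{p. prime p \<and> p \<le> M \<and> \<not> p dvd N}"
  have "finite ?Q" by (rule finite_subset[of _ "{..M}"]) auto
  then have dvd_Prod: "p dvd \<Prod>?Q \<longleftrightarrow> p \<le> M \<and> \<not> p dvd N" if "prime p" for p
    using that by (auto simp: prime_dvd_prod_iff dest: primes_dvd_imp_eq)
  have "n \<noteq> 0" using assms(1) by (simp add: squarefree_gt_0)
  show ?thesis
  proof
    assume "n dvd N"
    then show "coprime n (\<Prod>?Q)"
      by (auto simp: coprime_iff_no_common_prime_divisor dvd_Prod intro: dvd_trans)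
  next
    assume coprime: "coprime n (\<Prod>?Q)"
    show "n dvd N"
    proof (cases "N = 0")
      case False
      have "prime_factors n \<subseteq> prime_factors N"
      proof
        fix p assume "p \<in> prime_factors n"
        then have "prime p" "p dvd n" by auto
        moreover have "p \<le> M" using \<open>p dvd n\<close> \<open>n \<noteq> 0\<close> assms(2) by (auto dest: dvd_imp_le)
        ultimately show "p \<in> prime_factors N"
          using coprime False by (auto simp: coprime_iff_no_common_prime_divisor dvd_Prod
                                       in_prime_factors_iff)
      qed
      then show ?thesis using assms(1) False by (intro squarefree_dvdI)
    qed simp
  qed
qed

lemma abs_sum_moebius_divisors_le_1:
  fixes N :: nat and x :: real assumes "x \<ge> 1"
  shows "\<bar>\<Sum>n\<in>{n. n dvd N \<and> real n \<le> x}. moebius_mu n / real n\<bar> \<le> 1"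
proof -
  define P where "P = \<Prod>{p. prime p \<and> p \<le> nat \<lfloor>x\<rfloor> \<and> \<not> p dvd N}"
  define f where "f n = moebius_mu n / real n" for n
  let ?A = "{n. n dvd N \<and> real n \<le> x}" and ?C = "{n. 1 \<le> n \<and> real n \<le> x \<and> coprime n P}"
  have restrict: "sum f S = sum f {n \<in> S. squarefree n}" if "S \<subseteq> {n. real n \<le> x}" for S
    using that finite_of_nat_le[of x]
    by (intro sum.mono_neutral_right) (auto simp: f_def moebius_mu_def intro: finite_subset)
  have "sum f ?A = sum f {n \<in> ?A. squarefree n}" by (rule restrict) auto
  also have "{n \<in> ?A. squarefree n} = {n \<in> ?C. squarefree n}"
    using squarefree_dvd_iff_coprime_prod_primes[of _ "nat \<lfloor>x\<rfloor>" N] le_nat_floor[of _ x]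
    by (auto simp: P_def Suc_le_eq squarefree_gt_0)
  also have "sum f \<dots> = sum f ?C" by (rule restrict[symmetric]) auto
  finally have "sum f ?A = sum f ?C" .
  then show ?thesis using abs_sum_moebius_coprime_le_1[OF assms, of P] by (simp add: f_def)
qed

theorem mainTheorem2:
  fixes P N m :: nat and x :: real
  assumes "P \<ge> 1" and "N \<ge> 1" and "m \<ge> 1" and "x \<ge> 1"
  shows "\<bar>\<Sum>n\<in>{n. 1 \<le> n \<and> real n \<le> x \<and> coprime n P}. real_of_int (moebius_mu n) / real n\<bar> \<le> 1 \<and>
         \<bar>\<Sum>n\<in>{n. n dvd N \<and> real n \<le> x}. real_of_int (moebius_mu n) / real n\<bar> \<le> 1 \<and>
         \<bar>\<Sum>n\<in>{n. 1 \<le> n \<and> real n \<le> x}. real_of_int (moebius_mu (m * n)) / real n\<bar> \<le> 1"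
  using abs_sum_moebius_coprime_le_1 abs_sum_moebius_divisors_le_1 abs_sum_moebius_mult_le_1
    assms(4) by blast

end
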